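(* Let $r\geq1$ be odd, $m\geq 3$, $n=(r+1)m$, let $u$ be an integer with $\gcd(u,2^m-1)=1$, let $\alpha$ be a primitive element of $\mathbb{F}_{2^{rm}}$, let $0\leq s\leq 2^{rm}-2$, let $\Delta_s=\{\alpha^i\mid s\leq i\leq s+2^{rm-1}-1\}$, and let $f\colon\mathbb{F}_{2^{rm}}\times\mathbb{F}_{2^m}\to\mathbb{F}_2$ be the Boolean function with $\mathrm{supp}(f)=\{(\gamma y^u,y)\mid y\in\mathbb{F}_{2^m}^*,\ \gamma\in\Delta_s\}$. Then $\mathrm{AI}(f)\leq m$. Moreover, if $r=1$ and for every integer $0\le t\le 2^m-2$ the set $$S_t=\{(a,b)\mid 0\le a\le 2^{m}-2,\ 0\le b\le 2^m-1,\ ua+b\equiv t\ (\mathrm{mod}\ 2^m-1),\ \mathrm{wt}_m(a)+\mathrm{wt}_m(b)\le m-1\}$$ satisfies $|S_t|\le 2^{m-1}$, then $\mathrm{AI}(f)=m$ (i.e. $f$ has optimal algebraic immunity).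
   Context: $\mathbb{F}_{2^{rm}}\times\mathbb{F}_{2^m}$ is viewed as an $n$-dimensional $\mathbb{F}_2$-vector space ($\mathbb{F}_{2^m}\subseteq\mathbb{F}_{2^{rm}}$). For an $n$-variable Boolean function $f$, the algebraic immunity is $\mathrm{AI}(f)=\min\{\deg g\mid g\neq 0,\ fg=0\text{ or }(f+1)g=0\}$, where $\deg$ is the algebraic degree; the maximum possible value is $\lceil n/2\rceil$, and $f$ is said to have optimal algebraic immunity if $\mathrm{AI}(f)=\lceil n/2\rceil$. For $0\le i\le 2^k-1$, $\mathrm{wt}_k(i)$ is the number of $1$'s in the binary expansion of $i$ (so $\mathrm{wt}_m(2^m-1)=m$). *)

theory Defs
  imports Main
begin

definition bin_wt :: "nat \<Rightarrow> nat" where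
  "bin_wt i = card {j. bit i j}"

text \<open>The subfield of 2^m elements inside a finite field of characteristic 2.\<close>
definition subfld :: "nat \<Rightarrow> 'a::field set" where
  "subfld m = {y. y ^ (2 ^ m) = y}"

text \<open>Domain F_{2^N} x F_{2^M}, N = r m, M = m.\<close>
definition dom2 :: "nat \<Rightarrow> ('a::field \<times> 'a) set" where
  "dom2 M = UNIV \<times> subfld M"

text \<open>Boolean functions on the domain are predicates g :: 'a \<times> 'a \<Rightarrow> bool
  (values outside dom2 M are irrelevant).\<close>
definition deg_le :: "nat \<Rightarrow> nat \<Rightarrow> ('a::field \<times> 'a \<Rightarrow> bool) \<Rightarrow> nat \<Rightarrow> bool" where
  "deg_le N M g d \<longleftrightarrow>
     (\<exists>c :: nat \<Rightarrow> nat \<Rightarrow> 'a.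
        (\<forall>x y. y \<in> subfld M \<longrightarrow>
           (if g (x, y) then 1 else 0) = (\<Sum>i<2^N. \<Sum>j<2^M. c i j * x ^ i * y ^ j)) \<and>
        (\<forall>i<2^N. \<forall>j<2^M. c i j \<noteq> 0 \<longrightarrow> bin_wt i + bin_wt j \<le> d))"

definition alg_deg :: "nat \<Rightarrow> nat \<Rightarrow> ('a::field \<times> 'a \<Rightarrow> bool) \<Rightarrow> nat" where
  "alg_deg N M g = (LEAST d. deg_le N M g d)"

definition nz_annih :: "nat \<Rightarrow> ('a::field \<times> 'a \<Rightarrow> bool) \<Rightarrow> ('a \<times> 'a \<Rightarrow> bool) \<Rightarrow> bool" where
  "nz_annih M f g \<longleftrightarrow> (\<exists>p\<in>dom2 M. g p) \<and> (\<forall>p\<in>dom2 M. \<not> (f p \<and> g p))"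

definition alg_immunity :: "nat \<Rightarrow> nat \<Rightarrow> ('a::field \<times> 'a \<Rightarrow> bool) \<Rightarrow> nat" where
  "alg_immunity N M f =
     (LEAST d. \<exists>g. (nz_annih M f g \<or> nz_annih M (\<lambda>p. \<not> f p) g) \<and> alg_deg N M g = d)"

definition primitive_elem :: "'a::field \<Rightarrow> bool" where
  "primitive_elem \<alpha> \<longleftrightarrow> (\<forall>x. x \<noteq> 0 \<longrightarrow> (\<exists>i::nat. \<alpha> ^ i = x))"

end

theory Submission
  imports Defs "HOL-Computational_Algebra.Polynomial"
begin

text \<open>
  The upper bound comes from the annihilator \<open>[y = 0] = 1 - y ^ (2 ^ m - 1)\<close>, which has degree
  \<open>wt(2 ^ m - 1) = m\<close> and vanishes on the support of \<open>f\<close>.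

  For the lower bound (\<open>r = 1\<close>) let \<open>g\<close> of degree \<open>< m\<close> annihilate \<open>f\<close> or \<open>f + 1\<close>. On the curve
  \<open>x = \<gamma> y ^ u\<close> the monomial \<open>x ^ i y ^ j\<close> becomes \<open>\<gamma> ^ i y ^ t\<close> with \<open>t = u i + j mod 2 ^ m - 1\<close>, so
  \<open>g(\<gamma> y ^ u, y) = \<Sum>\<^sub>t P\<^sub>t(\<gamma>) y ^ t\<close>, and vanishing for all \<open>y \<noteq> 0\<close> forces every \<open>P\<^sub>t\<close> to vanish on
  \<open>\<Delta>\<^sub>s\<close> or on its complement. The degree bound confines the exponents of \<open>P\<^sub>t\<close> to the first
  coordinates of \<open>S\<^sub>t\<close>: at most \<open>2 ^ (m - 1)\<close> exponents, among them \<open>0\<close>. Both \<open>\<Delta>\<^sub>s\<close> and its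
  complement (\<open>0\<close> and \<open>2 ^ (m - 1) - 1\<close> consecutive powers of \<open>\<alpha>\<close>) then supply enough consecutive
  powers for a Vandermonde argument, so \<open>P\<^sub>t = 0\<close>. Since \<open>j \<mapsto> u i + j\<close> is injective modulo
  \<open>2 ^ m - 1\<close> and \<open>j = 2 ^ m - 1\<close> is excluded by the degree bound, every coefficient of \<open>g\<close> is a
  coefficient of some \<open>P\<^sub>t\<close>, hence \<open>g = 0\<close>.
\<close>

section \<open>Binary weights\<close>

lemma bit_imp_less_if_less_power:
  assumes "(n::nat) < 2 ^ m" "bit n j"
  shows "j < m"
  using assms by (metis bit_take_bit_iff take_bit_nat_eq_self)

lemma bin_wt_le:
  assumes "(n::nat) < 2 ^ m"
  shows "bin_wt n \<le> m"
proof -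
  have "{j. bit n j} \<subseteq> {..<m}"
    using assms bit_imp_less_if_less_power by blast
  then show ?thesis
    unfolding bin_wt_def by (metis card_lessThan card_mono finite_lessThan)
qed

lemma bin_wt_0 [simp]: "bin_wt 0 = 0"
  by (simp add: bin_wt_def)

lemma bits_two_power_minus_one: "{j. bit ((2::nat) ^ m - 1) j} = {..<m}"
proof -
  have "(2::nat) ^ m - 1 = mask m"
    by (simp add: mask_eq_exp_minus_1)
  then show ?thesis
    by (simp add: bit_mask_iff lessThan_def)
qed

lemma bin_wt_mask: "bin_wt (2 ^ m - 1) = m"
  unfolding bin_wt_def bits_two_power_minus_one by simp

lemma bin_wt_less:
  assumes "(n::nat) < 2 ^ m - 1"
  shows "bin_wt n < m"
proof (rule ccontr)
  assume "\<not> bin_wt n < m"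
  with assms bin_wt_le[of n m] have "card {j. bit n j} = card {..<m}"
    unfolding bin_wt_def by simp
  moreover have "{j. bit n j} \<subseteq> {..<m}"
    using assms bit_imp_less_if_less_power[of n m] by auto
  ultimately have "{j. bit n j} = {j. bit ((2::nat) ^ m - 1) j}"
    unfolding bits_two_power_minus_one by (simp add: card_subset_eq)
  then have "n = 2 ^ m - 1"
    by (metis bit_eqI mem_Collect_eq)
  with assms show False
    by simp
qed

section \<open>Finite fields and primitive elements\<close>

lemma two_le_card_field: "2 \<le> card (UNIV::'a::{field,finite} set)"
proof -
  have "card {0::'a, 1} \<le> card (UNIV::'a set)"
    by (rule card_mono) simp_all
  then show ?thesis
    by simp
qed

lemma power_card_minus_one_eq_1:
  fixes x :: "'a::{field,finite}"
  assumes "x \<noteq> 0"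
  shows "x ^ (card (UNIV::'a set) - 1) = 1"
proof -
  have card: "card (UNIV - {0::'a}) = card (UNIV::'a set) - 1"
    by (simp add: card_Diff_singleton)
  have "(\<Prod>y\<in>UNIV - {0}. y) = (\<Prod>y\<in>UNIV - {0::'a}. x * y)"
    by (rule prod.reindex_bij_witness[of _ "\<lambda>y. x * y" "\<lambda>y. y / x"]) (use assms in auto)
  also have "\<dots> = x ^ (card (UNIV::'a set) - 1) * (\<Prod>y\<in>UNIV - {0}. y)"
    by (simp add: prod.distrib card)
  finally show ?thesis
    by simp
qed

lemma power_card_eq_self:
  fixes x :: "'a::{field,finite}"
  shows "x ^ card (UNIV::'a set) = x"
proof (cases "x = 0")
  case False
  have "x ^ card (UNIV::'a set) = x * x ^ (card (UNIV::'a set) - 1)"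
    using finite_UNIV_card_ge_0[where 'a='a] by (simp add: power_eq_if)
  also have "\<dots> = x"
    by (simp only: power_card_minus_one_eq_1[OF False] mult_1_right)
  finally show ?thesis .
qed (simp add: finite_UNIV_card_ge_0)

lemma power_mod_eq:
  fixes x :: "'a::monoid_mult"
  assumes "x ^ Q = 1"
  shows "x ^ i = x ^ (i mod Q)"
proof -
  have "x ^ i = (x ^ Q) ^ (i div Q) * x ^ (i mod Q)"
    by (simp flip: power_add power_mult)
  then show ?thesis
    using assms by simp
qed

lemma primitive_elem_nonzero:
  fixes \<alpha> :: "'a::{field,finite}"
  assumes "primitive_elem \<alpha>" "3 \<le> card (UNIV::'a set)"
  shows "\<alpha> \<noteq> 0"
proof
  assume "\<alpha> = 0"
  have "card {0::'a, 1} < card (UNIV::'a set)"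
    using assms(2) by simp
  then have "UNIV \<noteq> {0::'a, 1}"
    by (metis less_irrefl)
  then obtain x :: 'a where "x \<noteq> 0" "x \<noteq> 1"
    by auto
  moreover obtain i where "\<alpha> ^ i = x"
    using assms(1) \<open>x \<noteq> 0\<close> unfolding primitive_elem_def by blast
  ultimately show False
    using \<open>\<alpha> = 0\<close> by (cases i) auto
qed

lemma inj_on_primitive_elem_power:
  fixes \<alpha> :: "'a::{field,finite}"
  assumes "primitive_elem \<alpha>" "3 \<le> card (UNIV::'a set)"
  shows "inj_on (\<lambda>i. \<alpha> ^ i) {..< card (UNIV::'a set) - 1}"
proof (rule eq_card_imp_inj_on)
  let ?Q = "card (UNIV::'a set) - 1"
  have "\<alpha> \<noteq> 0"
    using assms by (rule primitive_elem_nonzero)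
  have "(\<lambda>i. \<alpha> ^ i) ` {..<?Q} = UNIV - {0}"
  proof
    show "(\<lambda>i. \<alpha> ^ i) ` {..<?Q} \<subseteq> UNIV - {0}"
      using \<open>\<alpha> \<noteq> 0\<close> by auto
    show "UNIV - {0} \<subseteq> (\<lambda>i. \<alpha> ^ i) ` {..<?Q}"
    proof
      fix x :: 'a
      assume "x \<in> UNIV - {0}"
      then obtain i where "x = \<alpha> ^ i"
        using assms(1) unfolding primitive_elem_def by (metis DiffD2 singletonI)
      also have "\<dots> = \<alpha> ^ (i mod ?Q)"
        using power_card_minus_one_eq_1[OF \<open>\<alpha> \<noteq> 0\<close>] by (rule power_mod_eq)
      finally show "x \<in> (\<lambda>i. \<alpha> ^ i) ` {..<?Q}"
        using assms(2) by auto
    qed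
  qed
  then show "card ((\<lambda>i. \<alpha> ^ i) ` {..<?Q}) = card {..<?Q}"
    by (simp add: card_Diff_singleton)
qed simp

lemma primitive_elem_power_eq_power_iff:
  fixes \<alpha> :: "'a::{field,finite}"
  assumes "primitive_elem \<alpha>" "3 \<le> card (UNIV::'a set)"
  shows "\<alpha> ^ a = \<alpha> ^ b \<longleftrightarrow>
    a mod (card (UNIV::'a set) - 1) = b mod (card (UNIV::'a set) - 1)"
proof -
  let ?Q = "card (UNIV::'a set) - 1"
  have "\<alpha> ^ ?Q = 1"
    using assms primitive_elem_nonzero power_card_minus_one_eq_1 by blast
  then have "\<alpha> ^ a = \<alpha> ^ b \<longleftrightarrow> \<alpha> ^ (a mod ?Q) = \<alpha> ^ (b mod ?Q)"
    by (metis power_mod_eq)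
  also have "\<dots> \<longleftrightarrow> a mod ?Q = b mod ?Q"
    using inj_on_primitive_elem_power[OF assms] assms(2)
    by (intro inj_on_eq_iff) auto
  finally show ?thesis .
qed

section \<open>Vandermonde arguments\<close>

lemma coeffs_eq_0_if_vanishing_on:
  fixes b :: "nat \<Rightarrow> 'a::idom"
  assumes "n \<le> card A" "\<And>y. y \<in> A \<Longrightarrow> (\<Sum>k<n. b k * y ^ k) = 0" "t < n"
  shows "b t = 0"
proof -
  define p where "p = (\<Sum>k<n. monom (b k) k)"
  have coeff_p: "coeff p k = (if k < n then b k else 0)" for k
    by (simp add: p_def coeff_sum coeff_monom)
  have "degree p \<le> n - 1"
    by (rule degree_le) (auto simp: coeff_p)
  then have "degree p < n"
    using assms(3) by linarith
  then have "p = 0"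
    using assms by (intro poly_eqI_degree[of A]) (auto simp: p_def poly_sum poly_monom)
  then show ?thesis
    using coeff_p[of t] assms(3) by simp
qed

lemma weights_eq_0_if_power_sums_vanish:
  fixes b :: "'b \<Rightarrow> 'a::field" and \<beta> :: "'b \<Rightarrow> 'a"
  assumes "finite I" "inj_on \<beta> I" "card I \<le> K"
    and "\<And>k. k < K \<Longrightarrow> (\<Sum>i\<in>I. b i * \<beta> i ^ k) = 0" and "i0 \<in> I"
  shows "b i0 = 0"
proof -
  define P where "P = (\<Prod>i\<in>I - {i0}. [:- \<beta> i, 1:])"
  have poly_P: "poly P x = (\<Prod>i\<in>I - {i0}. x - \<beta> i)" for x
    by (simp add: P_def poly_prod)
  have "degree P = card (I - {i0})"
    unfolding P_def by (subst degree_prod_sum_eq) auto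
  moreover have "card (I - {i0}) < card I"
    using assms(1,5) by (rule card_Diff1_less)
  ultimately have "degree P < K"
    using assms(3) by linarith
  have "(\<Sum>i\<in>I - {i0}. b i * poly P (\<beta> i)) = 0"
    using assms(1) by (intro sum.neutral) (auto simp: poly_P)
  then have "b i0 * poly P (\<beta> i0) = (\<Sum>i\<in>I. b i * poly P (\<beta> i))"
    using assms(1,5) by (simp add: sum.remove)
  \<comment> \<open>Expanding \<open>P\<close> turns this into a combination of the vanishing power sums.\<close>
  also have "\<dots> = (\<Sum>k\<le>degree P. coeff P k * (\<Sum>i\<in>I. b i * \<beta> i ^ k))"
    by (simp add: poly_altdef sum_distrib_left sum.swap[of _ I] mult_ac)
  also have "\<dots> = 0"
    using assms(4) \<open>degree P < K\<close> by simp
  finally have "b i0 * poly P (\<beta> i0) = 0" .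
  moreover have "poly P (\<beta> i0) \<noteq> 0"
    using assms(1,2,5) by (auto simp: poly_P inj_on_def)
  ultimately show ?thesis
    by simp
qed

lemma weights_eq_0_if_vanishing_on_progression:
  fixes \<alpha> :: "'a::field" and a :: "nat \<Rightarrow> 'a"
  assumes "\<alpha> \<noteq> 0" "finite I" "inj_on (\<lambda>i. \<alpha> ^ i) I" "card I \<le> L"
    and "\<And>k. k < L \<Longrightarrow> (\<Sum>i\<in>I. a i * (\<alpha> ^ (s + k)) ^ i) = 0" and "i \<in> I"
  shows "a i = 0"
proof -
  have "(\<Sum>i\<in>I. a i * \<alpha> ^ (s * i) * (\<alpha> ^ i) ^ k) = (\<Sum>i\<in>I. a i * (\<alpha> ^ (s + k)) ^ i)" for k
    by (simp add: power_add power_mult_distrib flip: power_mult) (simp add: mult_ac)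
  then have "a i * \<alpha> ^ (s * i) = 0"
    using weights_eq_0_if_power_sums_vanish[of I "\<lambda>i. \<alpha> ^ i" L "\<lambda>i. a i * \<alpha> ^ (s * i)"] assms
    by simp
  then show ?thesis
    using assms(1) by simp
qed

lemma primitive_elem_power_notin_block:
  fixes \<alpha> :: "'a::{field,finite}"
  assumes "card (UNIV::'a set) = 2 * K" "2 \<le> K" "primitive_elem \<alpha>" "k < K - 1"
  shows "\<alpha> ^ (s + K + k) \<notin> {\<alpha> ^ i |i. s \<le> i \<and> i \<le> s + K - 1}"
proof
  assume "\<alpha> ^ (s + K + k) \<in> {\<alpha> ^ i |i. s \<le> i \<and> i \<le> s + K - 1}"
  then obtain i where i: "\<alpha> ^ (s + K + k) = \<alpha> ^ i" "s \<le> i" "i \<le> s + K - 1"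
    by blast
  have "(s + K + k) mod (2 * K - 1) = i mod (2 * K - 1)"
    using i(1) assms(1-3) primitive_elem_power_eq_power_iff[of \<alpha> "s + K + k" i] by simp
  then have "(2 * K - 1) dvd (s + K + k - i)"
    using i(3) by (simp add: mod_eq_dvd_iff_nat)
  moreover have "0 < s + K + k - i" "s + K + k - i < 2 * K - 1"
    using i(2,3) assms(2,4) by linarith+
  ultimately show False
    by (simp add: nat_dvd_not_less)
qed

lemma weights_eq_0_if_vanishing_on_half_powers:
  fixes \<alpha> :: "'a::{field,finite}" and a :: "nat \<Rightarrow> 'a" and s K :: nat
  defines "\<Delta> \<equiv> {\<alpha> ^ i |i. s \<le> i \<and> i \<le> s + K - 1}"
  assumes card: "card (UNIV::'a set) = 2 * K" and "2 \<le> K" and prim: "primitive_elem \<alpha>"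
    and I: "I \<subseteq> {..<2 * K - 1}" "0 \<in> I" "card I \<le> K"
    and \<Gamma>: "\<Gamma> = \<Delta> \<or> \<Gamma> = - \<Delta>"
    and vanish: "\<And>\<gamma>. \<gamma> \<in> \<Gamma> \<Longrightarrow> (\<Sum>i\<in>I. a i * \<gamma> ^ i) = 0"
    and "i \<in> I"
  shows "a i = 0"
proof -
  have card3: "3 \<le> card (UNIV::'a set)"
    using card \<open>2 \<le> K\<close> by simp
  have "\<alpha> \<noteq> 0"
    using prim card3 by (rule primitive_elem_nonzero)
  have "finite I"
    using I(1) finite_nat_iff_bounded by blast
  have inj: "inj_on (\<lambda>i. \<alpha> ^ i) J" if "J \<subseteq> I" for J
    using inj_on_primitive_elem_power[OF prim card3] I(1) that card by (auto intro: inj_on_subset)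
  from \<Gamma> show ?thesis
  proof
    assume "\<Gamma> = \<Delta>"
    then have "\<alpha> ^ (s + k) \<in> \<Gamma>" if "k < K" for k
      using that unfolding \<Delta>_def by force
    then show ?thesis
      using weights_eq_0_if_vanishing_on_progression[OF \<open>\<alpha> \<noteq> 0\<close> \<open>finite I\<close> inj I(3)]
        vanish \<open>i \<in> I\<close> by blast
  next
    \<comment> \<open>\<open>\<alpha>\<close> has order \<open>2 K - 1\<close>, so \<open>- \<Delta>\<close> contains \<open>0\<close> and the \<open>K - 1\<close> powers following \<open>\<Delta>\<close>.\<close>
    assume "\<Gamma> = - \<Delta>"
    have "0 \<in> \<Gamma>"
      using \<open>\<Gamma> = - \<Delta>\<close> \<open>\<alpha> \<noteq> 0\<close> unfolding \<Delta>_def by auto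
    moreover have "(\<Sum>i\<in>I. a i * 0 ^ i) = a 0"
      using \<open>finite I\<close> I(2) by (simp add: sum.remove power_0_left)
    ultimately have "a 0 = 0"
      using vanish by metis
    then have sum_I: "(\<Sum>i\<in>I - {0}. a i * \<gamma> ^ i) = (\<Sum>i\<in>I. a i * \<gamma> ^ i)" for \<gamma>
      using \<open>finite I\<close> I(2) by (simp add: sum.remove)
    have in_\<Gamma>: "\<alpha> ^ (s + K + k) \<in> \<Gamma>" if "k < K - 1" for k
      using primitive_elem_power_notin_block[OF card \<open>2 \<le> K\<close> prim that] \<open>\<Gamma> = - \<Delta>\<close>
      unfolding \<Delta>_def by simp
    have "a i = 0" if "i \<in> I - {0}" for i
      by (rule weights_eq_0_if_vanishing_on_progression[where I = "I - {0}" and L = "K - 1" and s = "s + K"])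
        (use \<open>\<alpha> \<noteq> 0\<close> \<open>finite I\<close> inj I(2,3) vanish in_\<Gamma> sum_I that in \<open>auto simp: card_Diff_singleton\<close>)
    then show ?thesis
      using \<open>a 0 = 0\<close> \<open>i \<in> I\<close> by blast
  qed
qed

section \<open>Restriction to the curves \<open>x = \<gamma> y ^ u\<close>\<close>

definition bipoly :: "(nat \<Rightarrow> nat \<Rightarrow> 'a::comm_semiring_1) \<Rightarrow> nat \<Rightarrow> 'a \<Rightarrow> 'a \<Rightarrow> 'a" where
  "bipoly c q x y = (\<Sum>i<q. \<Sum>j<q. c i j * x ^ i * y ^ j)"

definition curve_exponent :: "int \<Rightarrow> nat \<Rightarrow> nat \<Rightarrow> nat \<Rightarrow> nat" where
  "curve_exponent u Q i j = nat ((u * int i + int j) mod int Q)"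

definition curve_coeff ::
    "(nat \<Rightarrow> nat \<Rightarrow> 'a::comm_monoid_add) \<Rightarrow> int \<Rightarrow> nat \<Rightarrow> nat \<Rightarrow> nat \<Rightarrow> nat \<Rightarrow> 'a" where
  "curve_coeff c u Q q t i = (\<Sum>j | j < q \<and> curve_exponent u Q i j = t. c i j)"

lemma curve_exponent_less: "0 < Q \<Longrightarrow> curve_exponent u Q i j < Q"
  by (simp add: curve_exponent_def nat_less_iff)

lemma power_int_eq_power_mod:
  fixes y :: "'a::field"
  assumes "y ^ Q = 1" "0 < Q"
  shows "y powi z = y ^ nat (z mod int Q)"
proof -
  have "y \<noteq> 0"
    using assms by (auto simp: power_0_left)
  have "y powi z = y powi (int Q * (z div int Q)) * y powi (z mod int Q)"
    using \<open>y \<noteq> 0\<close> by (simp flip: power_int_add)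
  also have "y powi (int Q * (z div int Q)) = 1"
    by (simp add: power_int_mult power_int_of_nat assms(1))
  also have "y powi (z mod int Q) = y ^ nat (z mod int Q)"
    using assms(2) by (simp flip: power_int_of_nat)
  finally show ?thesis
    by simp
qed

lemma monomial_on_curve:
  fixes y :: "'a::field"
  assumes "y ^ Q = 1" "0 < Q"
  shows "(\<gamma> * y powi u) ^ i * y ^ j = \<gamma> ^ i * y ^ curve_exponent u Q i j"
proof -
  have "y \<noteq> 0"
    using assms by (auto simp: power_0_left)
  have "(\<gamma> * y powi u) ^ i * y ^ j = \<gamma> ^ i * (y powi (u * int i) * y powi int j)"
    by (simp add: power_mult_distrib power_int_power' power_int_of_nat)
  also have "y powi (u * int i) * y powi int j = y powi (u * int i + int j)"
    using \<open>y \<noteq> 0\<close> by (simp add: power_int_add)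
  also have "\<dots> = y ^ curve_exponent u Q i j"
    unfolding curve_exponent_def using assms by (rule power_int_eq_power_mod)
  finally show ?thesis .
qed

lemma bipoly_on_curve:
  fixes y :: "'a::field"
  assumes "y ^ Q = 1" "0 < Q"
  shows "bipoly c q (\<gamma> * y powi u) y = (\<Sum>t<Q. (\<Sum>i<q. curve_coeff c u Q q t i * \<gamma> ^ i) * y ^ t)"
proof -
  have "bipoly c q (\<gamma> * y powi u) y = (\<Sum>i<q. \<Sum>j<q. c i j * \<gamma> ^ i * y ^ curve_exponent u Q i j)"
    unfolding bipoly_def using monomial_on_curve[OF assms] by (simp add: mult.assoc)
  also have "\<dots> = (\<Sum>i<q. \<Sum>t<Q. curve_coeff c u Q q t i * \<gamma> ^ i * y ^ t)"
  proof (rule sum.cong[OF refl])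
    fix i
    have "(\<Sum>j<q. c i j * \<gamma> ^ i * y ^ curve_exponent u Q i j)
        = (\<Sum>t<Q. \<Sum>j | j < q \<and> curve_exponent u Q i j = t. c i j * \<gamma> ^ i * y ^ t)"
      using sum.group[of "{..<q}" "{..<Q}" "curve_exponent u Q i" "\<lambda>j. c i j * \<gamma> ^ i * y ^ curve_exponent u Q i j"]
      by (simp add: curve_exponent_less assms(2) image_subset_iff conj_commute)
    then show "(\<Sum>j<q. c i j * \<gamma> ^ i * y ^ curve_exponent u Q i j)
        = (\<Sum>t<Q. curve_coeff c u Q q t i * \<gamma> ^ i * y ^ t)"
      by (simp add: curve_coeff_def sum_distrib_right)
  qed
  also have "\<dots> = (\<Sum>t<Q. (\<Sum>i<q. curve_coeff c u Q q t i * \<gamma> ^ i) * y ^ t)"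
    by (subst sum.swap) (simp add: sum_distrib_right)
  finally show ?thesis .
qed

lemma curve_coeff_poly_eq_0:
  fixes \<gamma> :: "'a::{field,finite}"
  assumes "\<And>y. y \<noteq> 0 \<Longrightarrow> bipoly c q (\<gamma> * y powi u) y = 0" "t < card (UNIV::'a set) - 1"
  shows "(\<Sum>i<q. curve_coeff c u (card (UNIV::'a set) - 1) q t i * \<gamma> ^ i) = 0"
proof (rule coeffs_eq_0_if_vanishing_on[where A = "UNIV - {0}"
    and b = "\<lambda>t. \<Sum>i<q. curve_coeff c u (card (UNIV::'a set) - 1) q t i * \<gamma> ^ i"])
  show "card (UNIV::'a set) - 1 \<le> card (UNIV - {0::'a})"
    by (simp add: card_Diff_singleton)
  have "0 < card (UNIV::'a set) - 1"
    using assms(2) by simp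
  fix y :: 'a
  assume "y \<in> UNIV - {0}"
  then show "(\<Sum>t<card (UNIV::'a set) - 1.
      (\<Sum>i<q. curve_coeff c u (card (UNIV::'a set) - 1) q t i * \<gamma> ^ i) * y ^ t) = 0"
    using assms(1) bipoly_on_curve[OF power_card_minus_one_eq_1 \<open>0 < card (UNIV::'a set) - 1\<close>]
    by simp
qed (fact assms(2))

lemma curve_exponent_eq_iff:
  assumes "j < Q" "j' < Q"
  shows "curve_exponent u Q i j = curve_exponent u Q i j' \<longleftrightarrow> j = j'"
proof
  assume "curve_exponent u Q i j = curve_exponent u Q i j'"
  moreover have "0 < int Q"
    using assms by simp
  ultimately have "(u * int i + int j) mod int Q = (u * int i + int j') mod int Q"
    by (simp add: curve_exponent_def eq_nat_nat_iff)
  then have "(u * int i + int j - u * int i) mod int Q = (u * int i + int j' - u * int i) mod int Q"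
    by (rule mod_diff_cong) simp
  then show "j = j'"
    using assms by simp
qed simp

lemma curve_coeff_at_curve_exponent:
  assumes "j < Q" "j < q" "\<And>j'. Q \<le> j' \<Longrightarrow> j' < q \<Longrightarrow> c i j' = 0"
  shows "curve_coeff c u Q q (curve_exponent u Q i j) i = c i j"
proof -
  let ?A = "{j'. j' < q \<and> curve_exponent u Q i j' = curve_exponent u Q i j}"
  have "c i j' = 0" if "j' \<in> ?A - {j}" for j'
    using that assms curve_exponent_eq_iff[OF assms(1), of j' u i] by (cases "Q \<le> j'") auto
  then have "(\<Sum>j'\<in>?A - {j}. c i j') = 0"
    by (meson sum.neutral)
  then show ?thesis
    using assms(2) by (simp add: curve_coeff_def sum.remove[of ?A j])
qed

definition low_weight_pairs :: "int \<Rightarrow> nat \<Rightarrow> nat \<Rightarrow> (nat \<times> nat) set" where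
  "low_weight_pairs u m t = {(a, b). a \<le> 2 ^ m - 2 \<and> b \<le> 2 ^ m - 1 \<and>
     (u * int a + int b) mod (2 ^ m - 1) = int t mod (2 ^ m - 1) \<and> bin_wt a + bin_wt b \<le> m - 1}"

lemma finite_low_weight_pairs: "finite (low_weight_pairs u m t)"
proof (rule finite_subset)
  show "low_weight_pairs u m t \<subseteq> {..2 ^ m - 2} \<times> {..2 ^ m - 1}"
    by (auto simp: low_weight_pairs_def)
qed simp

lemma fst_low_weight_pairs_subset:
  assumes "1 \<le> m"
  shows "fst ` low_weight_pairs u m t \<subseteq> {..<2 ^ m - 1}"
proof -
  have "2 \<le> (2::nat) ^ m"
    using assms by (cases m) auto
  then show ?thesis
    by (auto simp: low_weight_pairs_def)
qed

lemma less_mask_if_bin_wt_less: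
  assumes "(n::nat) < 2 ^ m" "bin_wt n < m"
  shows "n < 2 ^ m - 1"
  using assms bin_wt_mask[of m] by (cases "n = 2 ^ m - 1") auto

lemma zero_mem_low_weight_pairs:
  assumes "t < 2 ^ m - 1"
  shows "(0, t) \<in> low_weight_pairs u m t"
  using assms bin_wt_less[OF assms] by (simp add: low_weight_pairs_def)

lemma mem_low_weight_pairs:
  assumes "i < 2 ^ m" "j < 2 ^ m" "bin_wt i + bin_wt j \<le> m - 1" "1 \<le> m"
  shows "(i, j) \<in> low_weight_pairs u m (curve_exponent u (2 ^ m - 1) i j)"
proof -
  have "i < 2 ^ m - 1"
    using assms by (intro less_mask_if_bin_wt_less) auto
  then have "i \<le> 2 ^ m - 2" "j \<le> 2 ^ m - 1"
    using assms(2) by linarith+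
  moreover have "int (2 ^ m - 1) = 2 ^ m - 1"
    using assms(1) by (simp add: of_nat_diff)
  moreover have "(0::int) < 2 ^ m - 1"
    using \<open>i < 2 ^ m - 1\<close> calculation(3) by linarith
  ultimately show ?thesis
    using assms(3) by (simp add: low_weight_pairs_def curve_exponent_def)
qed

lemma curve_coeff_nonzero_imp_mem_low_weight_pairs:
  assumes wt: "\<And>i j. i < 2 ^ m \<Longrightarrow> j < 2 ^ m \<Longrightarrow> c i j \<noteq> 0 \<Longrightarrow> bin_wt i + bin_wt j \<le> m - 1"
    and "1 \<le> m" "i < 2 ^ m" "curve_coeff c u (2 ^ m - 1) (2 ^ m) t i \<noteq> 0"
  shows "i \<in> fst ` low_weight_pairs u m t"
proof -
  obtain j where "j < 2 ^ m" "curve_exponent u (2 ^ m - 1) i j = t" "c i j \<noteq> 0"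
    using assms(4) sum.not_neutral_contains_not_neutral unfolding curve_coeff_def by blast
  then have "(i, j) \<in> low_weight_pairs u m t"
    using mem_low_weight_pairs[of i m j u] wt assms(2,3) by simp
  then show ?thesis
    by force
qed

lemma low_weight_curve_coeff_eq_0_if_vanishing_on_curves:
  fixes c :: "nat \<Rightarrow> nat \<Rightarrow> 'a::{field,finite}" and \<alpha> :: 'a and s m :: nat
  defines "\<Delta> \<equiv> {\<alpha> ^ i |i. s \<le> i \<and> i \<le> s + 2 ^ (m - 1) - 1}"
  assumes card: "card (UNIV::'a set) = 2 ^ m" and "2 \<le> m" and prim: "primitive_elem \<alpha>"
    and pairs: "\<And>t. t < 2 ^ m - 1 \<Longrightarrow> card (low_weight_pairs u m t) \<le> 2 ^ (m - 1)"
    and wt: "\<And>i j. i < 2 ^ m \<Longrightarrow> j < 2 ^ m \<Longrightarrow> c i j \<noteq> 0 \<Longrightarrow> bin_wt i + bin_wt j \<le> m - 1"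
    and \<Gamma>: "\<Gamma> = \<Delta> \<or> \<Gamma> = - \<Delta>"
    and vanish: "\<And>\<gamma> y. \<gamma> \<in> \<Gamma> \<Longrightarrow> y \<noteq> 0 \<Longrightarrow> bipoly c (2 ^ m) (\<gamma> * y powi u) y = 0"
    and "t < 2 ^ m - 1" "i < 2 ^ m"
  shows "curve_coeff c u (2 ^ m - 1) (2 ^ m) t i = 0"
proof -
  define K :: nat where "K = 2 ^ (m - 1)"
  have two_power_m: "2 ^ m = 2 * K"
    using \<open>2 \<le> m\<close> by (cases m) (simp_all add: K_def)
  have "2 \<le> K"
    using power_increasing[of 1 "m - 1" "2::nat"] \<open>2 \<le> m\<close> by (simp add: K_def)
  let ?a = "curve_coeff c u (2 ^ m - 1) (2 ^ m) t"
  let ?I = "fst ` low_weight_pairs u m t"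
  have supp: "i' \<in> ?I" if "i' < 2 ^ m" "?a i' \<noteq> 0" for i'
    using curve_coeff_nonzero_imp_mem_low_weight_pairs[OF wt] \<open>2 \<le> m\<close> that by simp
  have I_less: "?I \<subseteq> {..<2 * K - 1}"
    using fst_low_weight_pairs_subset[of m u t] \<open>2 \<le> m\<close> two_power_m by simp
  have card_I: "card ?I \<le> K"
    using card_image_le[OF finite_low_weight_pairs, of fst u m t] pairs[of t] \<open>t < 2 ^ m - 1\<close>
    by (simp add: K_def)
  have zero_I: "0 \<in> ?I"
    using zero_mem_low_weight_pairs[of t m u] \<open>t < 2 ^ m - 1\<close> by force
  have vanish_I: "(\<Sum>i\<in>?I. ?a i * \<gamma> ^ i) = 0" if "\<gamma> \<in> \<Gamma>" for \<gamma>
  proof -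
    have "(\<Sum>i\<in>?I. ?a i * \<gamma> ^ i) = (\<Sum>i<2 ^ m. ?a i * \<gamma> ^ i)"
      using I_less supp two_power_m by (intro sum.mono_neutral_left) auto
    also have "\<dots> = 0"
      using curve_coeff_poly_eq_0[OF vanish[OF that]] \<open>t < 2 ^ m - 1\<close> card by simp
    finally show ?thesis .
  qed
  have \<Gamma>_K: "\<Gamma> = {\<alpha> ^ i |i. s \<le> i \<and> i \<le> s + K - 1} \<or> \<Gamma> = - {\<alpha> ^ i |i. s \<le> i \<and> i \<le> s + K - 1}"
    using \<Gamma> unfolding \<Delta>_def K_def .
  have "?a i' = 0" if "i' \<in> ?I" for i'
    using card[unfolded two_power_m] \<open>2 \<le> K\<close> prim I_less zero_I card_I \<Gamma>_K vanish_I that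
    by (rule weights_eq_0_if_vanishing_on_half_powers)
  then show ?thesis
    using supp \<open>i < 2 ^ m\<close> by blast
qed

lemma low_weight_bipoly_eq_0_if_vanishing_on_curves:
  fixes c :: "nat \<Rightarrow> nat \<Rightarrow> 'a::{field,finite}" and \<alpha> :: 'a and s m :: nat
  defines "\<Delta> \<equiv> {\<alpha> ^ i |i. s \<le> i \<and> i \<le> s + 2 ^ (m - 1) - 1}"
  assumes card: "card (UNIV::'a set) = 2 ^ m" and "2 \<le> m" and prim: "primitive_elem \<alpha>"
    and pairs: "\<And>t. t < 2 ^ m - 1 \<Longrightarrow> card (low_weight_pairs u m t) \<le> 2 ^ (m - 1)"
    and wt: "\<And>i j. i < 2 ^ m \<Longrightarrow> j < 2 ^ m \<Longrightarrow> c i j \<noteq> 0 \<Longrightarrow> bin_wt i + bin_wt j \<le> m - 1"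
    and \<Gamma>: "\<Gamma> = \<Delta> \<or> \<Gamma> = - \<Delta>"
    and vanish: "\<And>\<gamma> y. \<gamma> \<in> \<Gamma> \<Longrightarrow> y \<noteq> 0 \<Longrightarrow> bipoly c (2 ^ m) (\<gamma> * y powi u) y = 0"
    and "i < 2 ^ m" "j < 2 ^ m"
  shows "c i j = 0"
proof (rule ccontr)
  assume "c i j \<noteq> 0"
  then have "j < 2 ^ m - 1"
    using wt[of i j] assms(9,10) less_mask_if_bin_wt_less[of j m] \<open>2 \<le> m\<close> by simp
  have last_column: "c i j' = 0" if "2 ^ m - 1 \<le> j'" "j' < 2 ^ m" for j'
  proof -
    have "j' = 2 ^ m - 1"
      using that by simp
    then have "\<not> bin_wt i + bin_wt j' \<le> m - 1"
      using bin_wt_mask[of m] \<open>2 \<le> m\<close> by simp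
    then show ?thesis
      using wt[of i j'] that assms(9) by blast
  qed
  have "c i j = curve_coeff c u (2 ^ m - 1) (2 ^ m) (curve_exponent u (2 ^ m - 1) i j) i"
    using \<open>j < 2 ^ m - 1\<close> assms(10) last_column by (intro curve_coeff_at_curve_exponent[symmetric])
  also have "\<dots> = 0"
    using curve_exponent_less[of "2 ^ m - 1"] \<open>j < 2 ^ m - 1\<close> assms(9)
    by (intro low_weight_curve_coeff_eq_0_if_vanishing_on_curves[OF card \<open>2 \<le> m\<close> prim pairs wt
          \<Gamma>[unfolded \<Delta>_def] vanish[unfolded \<Delta>_def]]) auto
  finally show False
    using \<open>c i j \<noteq> 0\<close> by contradiction
qed

section \<open>Algebraic degree and algebraic immunity\<close>

lemma finite_field_interpolation:
  fixes F :: "'a::{field,finite} \<Rightarrow> 'a"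
  shows "\<exists>d. \<forall>x. F x = (\<Sum>i<card (UNIV::'a set). d i * x ^ i)"
proof -
  let ?n = "card (UNIV::'a set)"
  define p where "p = (\<Sum>a\<in>UNIV. smult (F a) (1 - [:- a, 1:] ^ (?n - 1)))"
  have "degree (smult (F a) (1 - [:- a, 1:] ^ (?n - 1))) \<le> ?n - 1" for a
    by (rule order.trans[OF degree_smult_le], rule order.trans[OF degree_diff_le_max])
      (auto intro: order.trans[OF degree_power_le])
  then have "degree p < ?n"
    unfolding p_def using finite_UNIV_card_ge_0[where 'a='a]
    by (meson degree_sum_le finite le_less_trans diff_less zero_less_one)
  have "poly p x = F x" for x
  proof -
    have indicator: "F a * (1 - (x - a) ^ (?n - 1)) = (if a = x then F a else 0)" for a
      using power_card_minus_one_eq_1[of "x - a"] two_le_card_field[where 'a='a]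
      by (auto simp: power_0_left)
    have "poly p x = (\<Sum>a\<in>UNIV. F a * (1 - (x - a) ^ (?n - 1)))"
      by (simp add: p_def poly_sum)
    also have "\<dots> = F x"
      unfolding indicator by simp
    finally show ?thesis .
  qed
  moreover have "poly p x = (\<Sum>i<?n. coeff p i * x ^ i)" for x
    unfolding poly_altdef using \<open>degree p < ?n\<close>
    by (intro sum.mono_neutral_left) (auto simp: coeff_eq_0)
  ultimately show ?thesis
    by metis
qed

lemma finite_field_bivariate_interpolation:
  fixes F :: "'a::{field,finite} \<Rightarrow> 'a \<Rightarrow> 'a"
  shows "\<exists>c. \<forall>x y. F x y = bipoly c (card (UNIV::'a set)) x y"
proof -
  let ?n = "card (UNIV::'a set)"
  have "\<forall>y. \<exists>d. \<forall>x. F x y = (\<Sum>i<?n. d i * x ^ i)"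
    using finite_field_interpolation[of "\<lambda>x. F x _"] by blast
  then obtain e where e: "\<And>x y. F x y = (\<Sum>i<?n. e y i * x ^ i)"
    by (metis choice)
  have "\<forall>i. \<exists>d. \<forall>y. e y i = (\<Sum>j<?n. d j * y ^ j)"
    using finite_field_interpolation[of "\<lambda>y. e y _"] by blast
  then obtain c where c: "\<And>i y. e y i = (\<Sum>j<?n. c i j * y ^ j)"
    by (metis choice)
  have "F x y = bipoly c ?n x y" for x y
  proof -
    have "F x y = (\<Sum>i<?n. (\<Sum>j<?n. c i j * y ^ j) * x ^ i)"
      by (simp only: e c)
    also have "\<dots> = bipoly c ?n x y"
      unfolding bipoly_def sum_distrib_right
      by (intro sum.cong refl) (simp only: mult.assoc mult.commute[of "y ^ _"])
    finally show ?thesis .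
  qed
  then show ?thesis
    by blast
qed

lemma alg_deg_le: "deg_le N M g d \<Longrightarrow> alg_deg N M g \<le> d"
  unfolding alg_deg_def by (rule Least_le)

lemma alg_immunity_le_alg_deg:
  assumes "nz_annih M f g \<or> nz_annih M (\<lambda>p. \<not> f p) g"
  shows "alg_immunity N M f \<le> alg_deg N M g"
  unfolding alg_immunity_def using assms by (intro Least_le) blast

lemma alg_immunity_attained:
  assumes "nz_annih M f g \<or> nz_annih M (\<lambda>p. \<not> f p) g"
  obtains h where "nz_annih M f h \<or> nz_annih M (\<lambda>p. \<not> f p) h"
    and "alg_deg N M h = alg_immunity N M f"
  using LeastI_ex[of "\<lambda>d. \<exists>g. (nz_annih M f g \<or> nz_annih M (\<lambda>p. \<not> f p) g) \<and> alg_deg N M g = d"]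
    assms unfolding alg_immunity_def by blast

lemma deg_le_alg_deg:
  fixes g :: "'a::{field,finite} \<times> 'a \<Rightarrow> bool"
  assumes "card (UNIV::'a set) = 2 ^ M"
  shows "deg_le M M g (alg_deg M M g)"
proof -
  obtain c where "\<And>x y. (if g (x, y) then 1 else 0) = bipoly c (2 ^ M) x y"
    using finite_field_bivariate_interpolation[of "\<lambda>x y. if g (x, y) then 1 else 0"] assms by auto
  then have "deg_le M M g (M + M)"
    unfolding deg_le_def bipoly_def by (auto intro!: exI[of _ c] add_mono bin_wt_le)
  then show ?thesis
    unfolding alg_deg_def by (rule LeastI)
qed

lemma nz_annih_axis:
  assumes "\<And>x y. f (x, y) \<Longrightarrow> y \<noteq> 0"
  shows "nz_annih M f (\<lambda>p. snd p = 0)"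
proof -
  have "(0, 0) \<in> dom2 M"
    by (simp add: dom2_def subfld_def)
  moreover have "\<not> (f p \<and> snd p = 0)" for p
    using assms[of "fst p" "snd p"] by auto
  ultimately show ?thesis
    unfolding nz_annih_def by force
qed

lemma deg_le_axis:
  assumes "1 \<le> M"
  shows "deg_le N M (\<lambda>p::'a::field \<times> 'a. snd p = 0) M"
proof -
  define c :: "nat \<Rightarrow> nat \<Rightarrow> 'a" where
    "c i j = (if i = 0 then (if j = 0 then 1 else 0) - (if j = 2 ^ M - 1 then 1 else 0) else 0)" for i j
  have "(if y = 0 then 1 else 0) = (\<Sum>i<2 ^ N. \<Sum>j<2 ^ M. c i j * x ^ i * y ^ j)"
    if "y \<in> subfld M" for x y :: 'a
  proof -
    have "(2::nat) ^ 1 \<le> 2 ^ M"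
      using assms by (intro power_increasing) auto
    then have "0 < (2::nat) ^ M - 1"
      by simp
    moreover have "y ^ (2 ^ M - 1) = 1" if "y \<noteq> 0"
    proof -
      have "y ^ (2 ^ M - 1) * y = 1 * y"
        using \<open>y \<in> subfld M\<close> power_minus_mult[of "2 ^ M" y] unfolding subfld_def by simp
      then show ?thesis
        using that by (rule mult_right_cancel[THEN iffD1, rotated])
    qed
    ultimately have "(if y = 0 then 1 else 0) = 1 - y ^ (2 ^ M - 1)"
      by (auto simp: power_0_left)
    also have "\<dots> = (\<Sum>j<2 ^ M. (if j = 0 then 1 else 0) - (if j = 2 ^ M - 1 then y ^ j else 0))"
      using \<open>0 < 2 ^ M - 1\<close> by (simp add: sum_subtractf)
    also have "\<dots> = (\<Sum>j<2 ^ M. c 0 j * y ^ j)"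
      by (rule sum.cong) (simp_all add: c_def left_diff_distrib)
    also have "\<dots> = (\<Sum>i<(2::nat) ^ N. if i = 0 then (\<Sum>j<2 ^ M. c 0 j * y ^ j) else 0)"
      by simp
    also have "\<dots> = (\<Sum>i<2 ^ N. \<Sum>j<2 ^ M. c i j * x ^ i * y ^ j)"
      by (rule sum.cong) (simp_all add: c_def)
    finally show ?thesis .
  qed
  moreover have "bin_wt i + bin_wt j \<le> M" if "c i j \<noteq> 0" for i j
    using that bin_wt_mask[of M] by (simp add: c_def split: if_splits)
  ultimately show ?thesis
    unfolding deg_le_def by (intro exI[of _ c]) auto
qed

lemma alg_immunity_le_if_supp_off_axis:
  fixes f :: "'a::field \<times> 'a \<Rightarrow> bool"
  assumes "1 \<le> M" "\<And>x y. f (x, y) \<Longrightarrow> y \<noteq> 0"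
  shows "alg_immunity N M f \<le> M"
proof -
  have "nz_annih M f (\<lambda>p. snd p = 0)"
    using assms(2) by (rule nz_annih_axis)
  then have "alg_immunity N M f \<le> alg_deg N M (\<lambda>p::'a \<times> 'a. snd p = 0)"
    by (meson alg_immunity_le_alg_deg)
  also have "\<dots> \<le> M"
    using assms(1) by (intro alg_deg_le deg_le_axis)
  finally show ?thesis .
qed

lemma mem_curve_set_iff:
  fixes \<gamma> y :: "'a::field"
  assumes "y \<noteq> 0"
  shows "(\<gamma> * y powi u, y) \<in> {(\<gamma>' * y' powi u, y') | \<gamma>' y'. y' \<in> Y \<and> y' \<noteq> 0 \<and> \<gamma>' \<in> \<Gamma>}
    \<longleftrightarrow> y \<in> Y \<and> \<gamma> \<in> \<Gamma>"
proof -
  have "y powi u \<noteq> 0"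
    using assms by (simp add: power_int_not_zero)
  then show ?thesis
    using assms by auto
qed

lemma annihilator_vanishes_on_curves:
  fixes g :: "'a::field \<times> 'a \<Rightarrow> bool"
  assumes "nz_annih M f g \<or> nz_annih M (\<lambda>p. \<not> f p) g"
    and f: "f = (\<lambda>p. p \<in> {(\<gamma> * y powi u, y) | \<gamma> y. y \<in> subfld M \<and> y \<noteq> 0 \<and> \<gamma> \<in> \<Delta>})"
  obtains \<Gamma> where "\<Gamma> = \<Delta> \<or> \<Gamma> = - \<Delta>"
    and "\<And>\<gamma> y. \<gamma> \<in> \<Gamma> \<Longrightarrow> y \<in> subfld M \<Longrightarrow> y \<noteq> 0 \<Longrightarrow> \<not> g (\<gamma> * y powi u, y)"
proof -
  have dom: "(\<gamma> * y powi u, y) \<in> dom2 M" if "y \<in> subfld M" for \<gamma> y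
    using that by (simp add: dom2_def)
  have curve: "f (\<gamma> * y powi u, y) \<longleftrightarrow> \<gamma> \<in> \<Delta>" if "y \<in> subfld M" "y \<noteq> 0" for \<gamma> y
    using mem_curve_set_iff[OF that(2)] that(1) unfolding f by blast
  from assms(1) show ?thesis
  proof
    assume "nz_annih M f g"
    then show ?thesis
      using that[of \<Delta>] dom curve unfolding nz_annih_def by blast
  next
    assume "nz_annih M (\<lambda>p. \<not> f p) g"
    then show ?thesis
      using that[of "- \<Delta>"] dom curve unfolding nz_annih_def by blast
  qed
qed

lemma alg_immunity_ge_if_low_weight_pairs_bounded:
  fixes \<alpha> :: "'a::{field,finite}" and f :: "'a \<times> 'a \<Rightarrow> bool" and s m :: nat
  defines "\<Delta> \<equiv> {\<alpha> ^ i |i. s \<le> i \<and> i \<le> s + 2 ^ (m - 1) - 1}"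
  assumes card: "card (UNIV::'a set) = 2 ^ m" and "2 \<le> m" and prim: "primitive_elem \<alpha>"
    and pairs: "\<And>t. t < 2 ^ m - 1 \<Longrightarrow> card (low_weight_pairs u m t) \<le> 2 ^ (m - 1)"
    and f: "f = (\<lambda>p. p \<in> {(\<gamma> * y powi u, y) | \<gamma> y. y \<in> subfld m \<and> y \<noteq> 0 \<and> \<gamma> \<in> \<Delta>})"
  shows "m \<le> alg_immunity m m f"
proof (rule ccontr)
  assume "\<not> m \<le> alg_immunity m m f"
  have "nz_annih m f (\<lambda>p. snd p = 0)"
    using f by (intro nz_annih_axis) auto
  then obtain g where g: "nz_annih m f g \<or> nz_annih m (\<lambda>p. \<not> f p) g" and "alg_deg m m g < m"
    using alg_immunity_attained \<open>\<not> m \<le> alg_immunity m m f\<close> by (metis not_le)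
  then obtain c where rep: "\<And>x y. y \<in> subfld m \<Longrightarrow> (if g (x, y) then 1 else 0) = bipoly c (2 ^ m) x y"
    and wt: "\<And>i j. i < 2 ^ m \<Longrightarrow> j < 2 ^ m \<Longrightarrow> c i j \<noteq> 0 \<Longrightarrow> bin_wt i + bin_wt j \<le> m - 1"
    using deg_le_alg_deg[OF card, of g] unfolding deg_le_def bipoly_def by fastforce
  have sub: "y \<in> subfld m" for y :: 'a
    using power_card_eq_self[of y] card by (simp add: subfld_def)
  obtain \<Gamma> where \<Gamma>: "\<Gamma> = \<Delta> \<or> \<Gamma> = - \<Delta>"
    and ann: "\<And>\<gamma> y. \<gamma> \<in> \<Gamma> \<Longrightarrow> y \<in> subfld m \<Longrightarrow> y \<noteq> 0 \<Longrightarrow> \<not> g (\<gamma> * y powi u, y)"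
    using annihilator_vanishes_on_curves[OF g f] by blast
  have "bipoly c (2 ^ m) (\<gamma> * y powi u) y = 0" if "\<gamma> \<in> \<Gamma>" "y \<noteq> 0" for \<gamma> y
    using rep[OF sub, of "\<gamma> * y powi u" y] ann[OF that(1) sub that(2)] by simp
  then have "c i j = 0" if "i < 2 ^ m" "j < 2 ^ m" for i j
    using low_weight_bipoly_eq_0_if_vanishing_on_curves[OF card \<open>2 \<le> m\<close> prim pairs wt \<Gamma>[unfolded \<Delta>_def]]
      that by blast
  then have "\<not> g (x, y)" for x y
    using rep[OF sub, of x y] by (simp add: bipoly_def split: if_splits)
  then show False
    using g unfolding nz_annih_def by auto
qed

theorem theorem2:
  fixes r m :: nat and u :: int and \<alpha> :: "'a::{field,finite}" and s :: nat
    and f :: "'a \<times> 'a \<Rightarrow> bool"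
  assumes "odd r" and "r \<ge> 1" and "m \<ge> 3"
    and "card (UNIV :: 'a set) = 2 ^ (r * m)"
    and "gcd u (2 ^ m - 1) = 1"
    and "primitive_elem \<alpha>"
    and "s \<le> 2 ^ (r * m) - 2"
    and "f = (\<lambda>p. p \<in> {(\<gamma> * y powi u, y) | \<gamma> y.
                 y \<in> subfld m \<and> y \<noteq> 0 \<and>
                 \<gamma> \<in> {\<alpha> ^ i | i. s \<le> i \<and> i \<le> s + 2 ^ (r * m - 1) - 1}})"
  shows "alg_immunity (r * m) m f \<le> m \<and>
         ((r = 1 \<and>
           (\<forall>t::nat. t \<le> 2 ^ m - 2 \<longrightarrow>
              card {(a, b). a \<le> 2 ^ m - 2 \<and> b \<le> 2 ^ m - 1 \<and>
                     (u * int a + int b) mod (2 ^ m - 1) = int t mod (2 ^ m - 1) \<and>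
                     bin_wt a + bin_wt b \<le> m - 1} \<le> 2 ^ (m - 1)))
          \<longrightarrow> alg_immunity (r * m) m f = m)"
proof -
  have upper: "alg_immunity (r * m) m f \<le> m"
    using \<open>m \<ge> 3\<close> assms(8) by (intro alg_immunity_le_if_supp_off_axis) auto
  have "alg_immunity (r * m) m f = m"
    if "r = 1" and pairs: "\<forall>t::nat. t \<le> 2 ^ m - 2 \<longrightarrow> card (low_weight_pairs u m t) \<le> 2 ^ (m - 1)"
  proof -
    have "m \<le> alg_immunity m m f"
      using assms(4,6,8) \<open>m \<ge> 3\<close> pairs \<open>r = 1\<close>
      by (intro alg_immunity_ge_if_low_weight_pairs_bounded) auto
    then show ?thesis
      using upper \<open>r = 1\<close> by simp
  qed
  with upper show ?thesis
    unfolding low_weight_pairs_def by blast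
qed

end
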